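(* Let $(L,\sim,\preceq,p)$ and $(L,\sim,\preceq,p')$ be planar dendritic systems with the same $L$, $\sim$ and $\preceq$. If $p(i,j)=p'(i,j)$ for all $i,j\in L$ (where $i$ denotes the class of $(i,i)$), then $p=p'$. That is, $p$ is uniquely determined by $\preceq$ and $\{p(i,j):i,j\in L\}$.
   Context: Let $L\subseteq\mathbb{N}$ be finite or countably infinite. A planar dendritic system $(L,\sim,\preceq,p)$ consists of an equivalence relation $\sim$ on $L\times L$, whose set of classes is denoted $T$ (the class of $(i,j)$ is written $(i,j)$); a partial order $\preceq$ on $T$; and a function $p:T\times T\to\{0,1,-1\}$, such that for all $i,j,k,\ell\in L$: (C1) $(i,j)\sim(j,i)$, and $(i,j)\sim(k,k)$ iff $i=j=k$; (C2) $(i,j)\preceq(i,i)$; (C3) $(i,j)\preceq(k,\ell)$ and $(k,\ell)\preceq(i,j)$ iff $(i,j)\sim(k,\ell)$; (C4) the $\preceq$-minimum of $\{(i,j),(k,\ell),(i,\ell),(i,k),(j,\ell),(j,k)\}$ exists in $T$; and for all $x,y,z\in T$: (P1) $p(x,y)=-p(y,x)$; (P2) $p(x,y)=0$ iff $x\preceq y$ or $y\preceq x$; (P3) if $p(x,y)=1$ and $p(y,z)=1$ then $p(x,z)=1$; (P4) if $p(x,y)=1$ and $y\preceq z$ then $p(x,z)=1$. The classes $(i,i)$ are the leaves, written $i$. *)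

theory Defs
  imports Main
begin

definition cls :: "(nat \<times> nat) rel \<Rightarrow> nat \<Rightarrow> nat \<Rightarrow> (nat \<times> nat) set" where
  "cls R i j = R `` {(i, j)}"

definition classes :: "nat set \<Rightarrow> (nat \<times> nat) rel \<Rightarrow> (nat \<times> nat) set set" where
  "classes L R = (L \<times> L) // R"

definition planar_dendritic_system ::
  "nat set \<Rightarrow> (nat \<times> nat) rel \<Rightarrow> ((nat \<times> nat) set \<Rightarrow> (nat \<times> nat) set \<Rightarrow> bool)
     \<Rightarrow> ((nat \<times> nat) set \<Rightarrow> (nat \<times> nat) set \<Rightarrow> int) \<Rightarrow> bool" where
  "planar_dendritic_system L R le p \<longleftrightarrow>
     equiv (L \<times> L) R \<and>
     \<comment> \<open>le is a partial order on T\<close>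
     (\<forall>x\<in>classes L R. le x x) \<and>
     (\<forall>x\<in>classes L R. \<forall>y\<in>classes L R. \<forall>z\<in>classes L R. le x y \<longrightarrow> le y z \<longrightarrow> le x z) \<and>
     (\<forall>x\<in>classes L R. \<forall>y\<in>classes L R. le x y \<longrightarrow> le y x \<longrightarrow> x = y) \<and>
     \<comment> \<open>p takes values in {0,1,-1} on T x T\<close>
     (\<forall>x\<in>classes L R. \<forall>y\<in>classes L R. p x y \<in> {0, 1, -1}) \<and>
     \<comment> \<open>(C1)\<close>
     (\<forall>i\<in>L. \<forall>j\<in>L. cls R i j = cls R j i) \<and>
     (\<forall>i\<in>L. \<forall>j\<in>L. \<forall>k\<in>L. cls R i j = cls R k k \<longleftrightarrow> (i = j \<and> j = k)) \<and>
     \<comment> \<open>(C2)\<close>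
     (\<forall>i\<in>L. \<forall>j\<in>L. le (cls R i j) (cls R i i)) \<and>
     \<comment> \<open>(C3)\<close>
     (\<forall>i\<in>L. \<forall>j\<in>L. \<forall>k\<in>L. \<forall>l\<in>L.
        (le (cls R i j) (cls R k l) \<and> le (cls R k l) (cls R i j)) \<longleftrightarrow> cls R i j = cls R k l) \<and>
     \<comment> \<open>(C4)\<close>
     (\<forall>i\<in>L. \<forall>j\<in>L. \<forall>k\<in>L. \<forall>l\<in>L.
        (let S = {cls R i j, cls R k l, cls R i l, cls R i k, cls R j l, cls R j k}
         in \<exists>m\<in>S. \<forall>y\<in>S. le m y)) \<and>
     \<comment> \<open>(P1)\<close>
     (\<forall>x\<in>classes L R. \<forall>y\<in>classes L R. p x y = - p y x) \<and>
     \<comment> \<open>(P2)\<close>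
     (\<forall>x\<in>classes L R. \<forall>y\<in>classes L R. p x y = 0 \<longleftrightarrow> (le x y \<or> le y x)) \<and>
     \<comment> \<open>(P3)\<close>
     (\<forall>x\<in>classes L R. \<forall>y\<in>classes L R. \<forall>z\<in>classes L R.
        p x y = 1 \<longrightarrow> p y z = 1 \<longrightarrow> p x z = 1) \<and>
     \<comment> \<open>(P4)\<close>
     (\<forall>x\<in>classes L R. \<forall>y\<in>classes L R. \<forall>z\<in>classes L R.
        p x y = 1 \<longrightarrow> le y z \<longrightarrow> p x z = 1)"

end

theory Submission
  imports Defs
begin

(* If p x y is nonzero and x, y lie below a, b, then p a b = p x y: P4 moves the right argument up,
   and P1-P3 forbid every value of p a b other than p x y when the left argument moves up.
   Taking a and b to be the leaves above x = (i,j) and y = (k,l) shows that every nonzero value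
   of p is a value on leaves, while the zeros of p are fixed by the order through P2. *)

lemma cls_in_classes: "i \<in> L \<Longrightarrow> j \<in> L \<Longrightarrow> cls R i j \<in> classes L R"
  unfolding cls_def classes_def by (simp add: quotientI)

lemma classesE:
  assumes "x \<in> classes L R"
  obtains i j where "i \<in> L" "j \<in> L" "x = cls R i j"
  using assms unfolding cls_def classes_def quotient_def by auto

locale planar_dendritic =
  fixes L :: "nat set" and R :: "(nat \<times> nat) rel"
    and le :: "(nat \<times> nat) set \<Rightarrow> (nat \<times> nat) set \<Rightarrow> bool"
    and p :: "(nat \<times> nat) set \<Rightarrow> (nat \<times> nat) set \<Rightarrow> int"
  assumes le_trans:
      "\<lbrakk>x \<in> classes L R; y \<in> classes L R; z \<in> classes L R; le x y; le y z\<rbrakk> \<Longrightarrow> le x z"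
    and p_values: "\<lbrakk>x \<in> classes L R; y \<in> classes L R\<rbrakk> \<Longrightarrow> p x y \<in> {0, 1, -1}"
    and le_leaf: "\<lbrakk>i \<in> L; j \<in> L\<rbrakk> \<Longrightarrow> le (cls R i j) (cls R i i)"
    and p_antisym: "\<lbrakk>x \<in> classes L R; y \<in> classes L R\<rbrakk> \<Longrightarrow> p x y = - p y x"
    and p_eq_0_iff:
      "\<lbrakk>x \<in> classes L R; y \<in> classes L R\<rbrakk> \<Longrightarrow> p x y = 0 \<longleftrightarrow> le x y \<or> le y x"
    and p_trans:
      "\<lbrakk>x \<in> classes L R; y \<in> classes L R; z \<in> classes L R; p x y = 1; p y z = 1\<rbrakk>
        \<Longrightarrow> p x z = 1"
    and p_mono_right:
      "\<lbrakk>x \<in> classes L R; y \<in> classes L R; b \<in> classes L R; p x y = 1; le y b\<rbrakk>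
        \<Longrightarrow> p x b = 1"

lemma planar_dendritic_systemD:
  "planar_dendritic_system L R le p \<Longrightarrow> planar_dendritic L R le p"
  unfolding planar_dendritic_system_def planar_dendritic_def Ball_def Let_def
  by (elim conjE) (intro conjI allI impI; meson)

context planar_dendritic
begin

lemma p_mono_left:
  assumes x: "x \<in> classes L R" and y: "y \<in> classes L R" and a: "a \<in> classes L R"
    and pxy: "p x y = 1" and "le x a"
  shows "p a y = 1"
proof -
  have "p x a = 0"
    using p_eq_0_iff[OF x a] \<open>le x a\<close> by blast
  have "p a y \<noteq> -1"
  proof
    assume "p a y = -1"
    then have "p y a = 1"
      using p_antisym[OF a y] by simp
    then show False
      using p_trans[OF x y a pxy] \<open>p x a = 0\<close> by simp
  qed
  moreover have "\<not> le a y"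
    using le_trans[OF x a y \<open>le x a\<close>] p_eq_0_iff[OF x y] pxy by auto
  moreover have "\<not> le y a"
    using p_mono_right[OF x y a pxy] \<open>p x a = 0\<close> by auto
  ultimately show ?thesis
    using p_values[OF a y] p_eq_0_iff[OF a y] by auto
qed

lemma p_upper_eq:
  assumes x: "x \<in> classes L R" and y: "y \<in> classes L R"
    and a: "a \<in> classes L R" and b: "b \<in> classes L R"
    and "p x y \<noteq> 0" "le x a" "le y b"
  shows "p a b = p x y"
proof -
  have up: "p u v = 1 \<Longrightarrow> p u' v' = 1"
    if "u \<in> classes L R" "v \<in> classes L R" "u' \<in> classes L R" "v' \<in> classes L R"
      "le u u'" "le v v'" for u v u' v'
    using that p_mono_left p_mono_right by blast
  consider "p x y = 1" | "p x y = -1"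
    using p_values[OF x y] \<open>p x y \<noteq> 0\<close> by auto
  then show ?thesis
  proof cases
    case 1
    then show ?thesis
      using up[OF x y a b] assms(6,7) by simp
  next
    case 2
    then have "p b a = 1"
      using up[OF y x b a] assms(6,7) p_antisym[OF y x] by simp
    then show ?thesis
      using 2 p_antisym[OF a b] by simp
  qed
qed

lemma p_eq_p_leaves:
  assumes "i \<in> L" "j \<in> L" "k \<in> L" "l \<in> L" "p (cls R i j) (cls R k l) \<noteq> 0"
  shows "p (cls R i j) (cls R k l) = p (cls R i i) (cls R k k)"
  using p_upper_eq[OF cls_in_classes cls_in_classes cls_in_classes cls_in_classes] le_leaf assms
  by metis

end

theorem lemma2p2:
  fixes L :: "nat set" and R :: "(nat \<times> nat) rel"
    and le :: "(nat \<times> nat) set \<Rightarrow> (nat \<times> nat) set \<Rightarrow> bool"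
    and p p' :: "(nat \<times> nat) set \<Rightarrow> (nat \<times> nat) set \<Rightarrow> int"
  assumes "planar_dendritic_system L R le p"
    and "planar_dendritic_system L R le p'"
    and "\<forall>i\<in>L. \<forall>j\<in>L. p (cls R i i) (cls R j j) = p' (cls R i i) (cls R j j)"
  shows "\<forall>x\<in>classes L R. \<forall>y\<in>classes L R. p x y = p' x y"
proof (intro ballI)
  interpret P: planar_dendritic L R le p
    using assms(1) by (rule planar_dendritic_systemD)
  interpret P': planar_dendritic L R le p'
    using assms(2) by (rule planar_dendritic_systemD)
  fix x y
  assume x: "x \<in> classes L R" and y: "y \<in> classes L R"
  obtain i j k l where ijkl: "i \<in> L" "j \<in> L" "k \<in> L" "l \<in> L"
    and "x = cls R i j" "y = cls R k l"
    using x y by (metis classesE)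
  have same_zeros: "p x y = 0 \<longleftrightarrow> p' x y = 0"
    using P.p_eq_0_iff[OF x y] P'.p_eq_0_iff[OF x y] by simp
  show "p x y = p' x y"
  proof (cases "p x y = 0")
    case False
    then show ?thesis
      using same_zeros P.p_eq_p_leaves P'.p_eq_p_leaves ijkl assms(3)
        \<open>x = cls R i j\<close> \<open>y = cls R k l\<close> by metis
  qed (use same_zeros in simp)
qed

end
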